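(* Assume the language contains infinitely many atoms (of a given sort) and no restriction is placed on the atoms allowed in generalizations. Then anti-unification for nominal terms-in-context is of nullary type: there exist two terms-in-context $p_1,p_2$ that have no minimal complete set of generalizations (in particular, they have no least general generalization).
   Context: Nominal terms $t::=f(t_1,\dots,t_n)\mid a\mid a.t\mid \pi\cdot X$ over sorted atoms $a,b,\dots$, variables $X,Y,\dots$ and function symbols; $\pi$ ranges over permutations (finite sequences of swappings $(a\,b)$ of same-sorted atoms), $\pi\bullet t$ is the swapping action, substitutions $\sigma$ map variables to terms (application allows atom capture and $(\pi\cdot X)\sigma=\pi\bullet(X\sigma)$). A freshness context is a finite set of constraints $a\# X$; $\nabla\vdash a\# t$ and $\nabla\vdash t\approx t'$ are the standard nominal freshness and $\alpha$-equivalence judgments (Urban–Pitts–Gabbay): $\nabla\vdash a\approx a$; $\nabla\vdash a.t\approx a.t'$ if $\nabla\vdash t\approx t'$; $\nabla\vdash a.t\approx a'.t'$ if $a\neq a'$, $\nabla\vdash t\approx(a\,a')\bullet t'$ and $\nabla\vdash a\# t'$; $\nabla\vdash\pi\cdot X\approx\pi'\cdot X$ if $a\# X\in\nabla$ for all $a$ with $\pi\bullet a\neq\pi'\bullet a$; applications componentwise; $\nabla\vdash a\# a'$ if $a\ne a'$; $\nabla\vdash a\#\pi\cdot X$ if $\pi^{-1}\bullet a\# X\in\nabla$; $a\#$ distributes over applications; $\nabla\vdash a\# a.t$; $\nabla\vdash a\# a'.t$ if $a\ne a'$ and $\nabla\vdash a\# t$. For a freshness context $\nabla$ and substitution $\sigma$,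 $\nabla\sigma$ is the minimal freshness context $\Delta$ with $\Delta\vdash a\# X\sigma$ for all $a\# X\in\nabla$ (computed by the standard simplification of freshness formulas; undefined/$\bot$ if none exists). $\sigma$ respects $\nabla$ if for all $X$, no atom $a$ with $a\# X\in\nabla$ occurs free in $X\sigma$ outside suspensions. A term-in-context is a pair $\langle\nabla,t\rangle$. $\langle\nabla_1,t_1\rangle\preceq\langle\nabla_2,t_2\rangle$ if there is a substitution $\sigma$ respecting $\nabla_1$ with $\nabla_1\sigma\subseteq\nabla_2$ and $\nabla_2\vdash t_1\sigma\approx t_2$. A generalization of $p_1,p_2$ is a term-in-context $p$ with $p\preceq p_1$ and $p\preceq p_2$. A complete set of generalizations of $p_1,p_2$ is a set $G$ of generalizations such that every generalization $p$ of $p_1,p_2$ satisfies $p\preceq q$ for some $q\in G$; it is minimal if no two distinct elements of $G$ are related by $\preceq$. Anti-unification is of nullary type if some pair of terms-in-context has no minimal complete set of generalizations. *)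

theory Defs
  imports Main
begin

text \<open>Nominal terms over atoms 'a, function symbols 'f and variables 'v.
  A permutation is a finite list of swappings; (a,b) is the swapping (a b).\<close>

type_synonym 'a perm = "('a \<times> 'a) list"

datatype ('a, 'f, 'v) ntrm =
    Fn 'f "('a, 'f, 'v) ntrm list"
  | At 'a
  | Ab 'a "('a, 'f, 'v) ntrm"
  | Su "'a perm" 'v

definition swap_atom :: "'a \<times> 'a \<Rightarrow> 'a \<Rightarrow> 'a" where
  "swap_atom s c = (if c = fst s then snd s else if c = snd s then fst s else c)"

text \<open>Action of pi = (a1 b1)...(an bn) on an atom: rightmost swapping first.\<close>
definition perm_atom :: "'a perm \<Rightarrow> 'a \<Rightarrow> 'a" where
  "perm_atom pi c = foldr swap_atom pi c"

definition perm_inv :: "'a perm \<Rightarrow> 'a perm" where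
  "perm_inv pi = rev pi"

fun perm_trm :: "'a perm \<Rightarrow> ('a, 'f, 'v) ntrm \<Rightarrow> ('a, 'f, 'v) ntrm" where
  "perm_trm pi (Fn f ts) = Fn f (map (perm_trm pi) ts)"
| "perm_trm pi (At a) = At (perm_atom pi a)"
| "perm_trm pi (Ab a t) = Ab (perm_atom pi a) (perm_trm pi t)"
| "perm_trm pi (Su pi' X) = Su (pi @ pi') X"

fun wf_trm :: "('a \<Rightarrow> 's) \<Rightarrow> ('a, 'f, 'v) ntrm \<Rightarrow> bool" where
  "wf_trm srt (Fn f ts) = (\<forall>t\<in>set ts. wf_trm srt t)"
| "wf_trm srt (At a) = True"
| "wf_trm srt (Ab a t) = wf_trm srt t"
| "wf_trm srt (Su pi X) = (\<forall>(a, b)\<in>set pi. srt a = srt b)"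

text \<open>Substitution application (atom capture allowed).\<close>
fun subst :: "('v \<Rightarrow> ('a, 'f, 'v) ntrm) \<Rightarrow> ('a, 'f, 'v) ntrm \<Rightarrow> ('a, 'f, 'v) ntrm" where
  "subst \<sigma> (Fn f ts) = Fn f (map (subst \<sigma>) ts)"
| "subst \<sigma> (At a) = At a"
| "subst \<sigma> (Ab a t) = Ab a (subst \<sigma> t)"
| "subst \<sigma> (Su pi X) = perm_trm pi (\<sigma> X)"

text \<open>Freshness contexts: sets of constraints a # X, represented by pairs (a, X).\<close>
type_synonym ('a, 'v) fctx = "('a \<times> 'v) set"

fun fresh :: "('a, 'v) fctx \<Rightarrow> 'a \<Rightarrow> ('a, 'f, 'v) ntrm \<Rightarrow> bool" where
  "fresh N a (Fn f ts) = (\<forall>t\<in>set ts. fresh N a t)"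
| "fresh N a (At a') = (a \<noteq> a')"
| "fresh N a (Ab a' t) = (a = a' \<or> fresh N a t)"
| "fresh N a (Su pi X) = ((perm_atom (perm_inv pi) a, X) \<in> N)"

inductive aeq :: "('a, 'v) fctx \<Rightarrow> ('a, 'f, 'v) ntrm \<Rightarrow> ('a, 'f, 'v) ntrm \<Rightarrow> bool"
  for N :: "('a, 'v) fctx" where
  aeq_At: "aeq N (At a) (At a)"
| aeq_Ab1: "aeq N t t' \<Longrightarrow> aeq N (Ab a t) (Ab a t')"
| aeq_Ab2: "a \<noteq> a' \<Longrightarrow> aeq N t (perm_trm [(a, a')] t') \<Longrightarrow> fresh N a t'
             \<Longrightarrow> aeq N (Ab a t) (Ab a' t')"
| aeq_Su: "(\<forall>c. perm_atom pi c \<noteq> perm_atom pi' c \<longrightarrow> (c, X) \<in> N)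
             \<Longrightarrow> aeq N (Su pi X) (Su pi' X)"
| aeq_Fn: "list_all2 (aeq N) ts ts' \<Longrightarrow> aeq N (Fn f ts) (Fn f ts')"

fun fa :: "('a, 'f, 'v) ntrm \<Rightarrow> 'a set" where
  "fa (Fn f ts) = (\<Union>t\<in>set ts. fa t)"
| "fa (At a) = {a}"
| "fa (Ab a t) = fa t - {a}"
| "fa (Su pi X) = {}"

definition respects_ctx :: "('a, 'v) fctx \<Rightarrow> ('v \<Rightarrow> ('a, 'f, 'v) ntrm) \<Rightarrow> bool" where
  "respects_ctx N \<sigma> = (\<forall>(a, X)\<in>N. a \<notin> fa (\<sigma> X))"

text \<open>D is nabla sigma: the minimal freshness context entailing a # X sigma
  for all a # X in nabla (it does not exist when no context entails these).\<close>
definition ctx_subst :: "('a, 'v) fctx \<Rightarrow> ('v \<Rightarrow> ('a, 'f, 'v) ntrm) \<Rightarrow> ('a, 'v) fctx \<Rightarrow> bool" where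
  "ctx_subst N \<sigma> D =
     (finite D \<and> (\<forall>(a, X)\<in>N. fresh D a (\<sigma> X)) \<and>
      (\<forall>D'. (\<forall>(a, X)\<in>N. fresh D' a (\<sigma> X)) \<longrightarrow> D \<subseteq> D'))"

type_synonym ('a, 'f, 'v) tic = "('a, 'v) fctx \<times> ('a, 'f, 'v) ntrm"

definition is_tic :: "('a \<Rightarrow> 's) \<Rightarrow> ('a, 'f, 'v) tic \<Rightarrow> bool" where
  "is_tic srt p = (finite (fst p) \<and> wf_trm srt (snd p))"

definition tic_leq :: "('a \<Rightarrow> 's) \<Rightarrow> ('a, 'f, 'v) tic \<Rightarrow> ('a, 'f, 'v) tic \<Rightarrow> bool" where
  "tic_leq srt p q =
     (\<exists>\<sigma>. (\<forall>X. wf_trm srt (\<sigma> X)) \<and> respects_ctx (fst p) \<sigma> \<and>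
          (\<exists>D. ctx_subst (fst p) \<sigma> D \<and> D \<subseteq> fst q) \<and>
          aeq (fst q) (subst \<sigma> (snd p)) (snd q))"

definition is_generalization ::
  "('a \<Rightarrow> 's) \<Rightarrow> ('a, 'f, 'v) tic \<Rightarrow> ('a, 'f, 'v) tic \<Rightarrow> ('a, 'f, 'v) tic \<Rightarrow> bool" where
  "is_generalization srt p1 p2 p = (is_tic srt p \<and> tic_leq srt p p1 \<and> tic_leq srt p p2)"

definition complete_gen_set ::
  "('a \<Rightarrow> 's) \<Rightarrow> ('a, 'f, 'v) tic \<Rightarrow> ('a, 'f, 'v) tic \<Rightarrow> ('a, 'f, 'v) tic set \<Rightarrow> bool" where
  "complete_gen_set srt p1 p2 G =
     ((\<forall>q\<in>G. is_generalization srt p1 p2 q) \<and>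
      (\<forall>p. is_generalization srt p1 p2 p \<longrightarrow> (\<exists>q\<in>G. tic_leq srt p q)))"

definition minimal_complete_gen_set ::
  "('a \<Rightarrow> 's) \<Rightarrow> ('a, 'f, 'v) tic \<Rightarrow> ('a, 'f, 'v) tic \<Rightarrow> ('a, 'f, 'v) tic set \<Rightarrow> bool" where
  "minimal_complete_gen_set srt p1 p2 G =
     (complete_gen_set srt p1 p2 G \<and>
      (\<forall>q\<in>G. \<forall>q'\<in>G. q \<noteq> q' \<longrightarrow> \<not> tic_leq srt q q'))"

end

theory Submission
  imports Defs
begin

text \<open>Every generalization of two distinct atoms a and b is a suspension pi.X in a
  freshness context N. Adding a constraint c # X for an atom c that is not yet
  constrained (and is neither pi^-1(a) nor pi^-1(b)) gives a strictly more specific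
  generalization: an instance of a suspension can only rename the atoms constrained for its
  variable injectively into those of the instance, so the number of constrained atoms cannot
  drop. Hence no generalization is maximal, and a minimal complete set G is impossible: for
  q \<in> G, a strictly more specific generalization lies below some q' \<in> G, minimality forces
  q' = q, contradicting strictness.\<close>

definition fresh_atoms :: "('a, 'v) fctx \<Rightarrow> 'v \<Rightarrow> 'a set" where
  "fresh_atoms N X = {a. (a, X) \<in> N}"

definition disagreement_set :: "'a perm \<Rightarrow> 'a perm \<Rightarrow> 'a set" where
  "disagreement_set p q = {c. perm_atom p c \<noteq> perm_atom q c}"

lemma perm_atom_Nil [simp]: "perm_atom [] c = c"
  by (simp add: perm_atom_def)

lemma perm_atom_append: "perm_atom (p @ q) c = perm_atom p (perm_atom q c)"
  by (simp add: perm_atom_def)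

lemma perm_atom_rev_cancel [simp]: "perm_atom (rev p) (perm_atom p c) = c"
proof (induction p arbitrary: c)
  case (Cons s p)
  have "swap_atom s (swap_atom s d) = d" for d
    by (simp add: swap_atom_def)
  with Cons show ?case
    by (simp add: perm_atom_def)
qed simp

lemma perm_atom_cancel_rev [simp]: "perm_atom p (perm_atom (rev p) c) = c"
  using perm_atom_rev_cancel [of "rev p"] by simp

lemma inj_perm_atom: "inj (perm_atom p)"
  by (metis injI perm_atom_rev_cancel)

lemma disagreement_set_append_subset:
  "disagreement_set (p1 @ r) p3 \<subseteq>
    disagreement_set (p2 @ r) p3 \<union> perm_atom (rev r) ` disagreement_set p1 p2"
proof
  fix c assume "c \<in> disagreement_set (p1 @ r) p3"
  then show "c \<in> disagreement_set (p2 @ r) p3 \<union> perm_atom (rev r) ` disagreement_set p1 p2"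
    by (cases "perm_atom (p2 @ r) c = perm_atom p3 c")
       (auto simp: disagreement_set_def perm_atom_append intro!: image_eqI [of c _ "perm_atom r c"])
qed

lemma finite_fresh_atoms: "finite N \<Longrightarrow> finite (fresh_atoms N X)"
  by (rule finite_subset [of _ "fst ` N"]) (force simp: fresh_atoms_def)+

lemma fresh_atoms_insert_same: "fresh_atoms (insert (c, X) N) X = insert c (fresh_atoms N X)"
  by (auto simp: fresh_atoms_def)

lemma aeq_Su_rightE:
  assumes "aeq N t (Su p X)"
  obtains p' where "t = Su p' X" and "disagreement_set p' p \<subseteq> fresh_atoms N X"
  using assms by (cases rule: aeq.cases) (auto simp: disagreement_set_def fresh_atoms_def)

lemma aeq_At_rightD: "aeq N t (At a) \<Longrightarrow> t = At a"
  by (cases rule: aeq.cases) auto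

lemma tic_leq_Su_SuE:
  fixes N1 N2 :: "('a, 'v) fctx"
  assumes "tic_leq srt (N1, Su p1 X1 :: ('a, 'f, 'v) ntrm) (N2, Su p2 X2)"
  obtains r where "wf_trm srt (Su r X2 :: ('a, 'f, 'v) ntrm)"
    and "perm_atom (rev r) ` fresh_atoms N1 X1 \<subseteq> fresh_atoms N2 X2"
    and "disagreement_set (p1 @ r) p2 \<subseteq> fresh_atoms N2 X2"
proof -
  obtain \<sigma> :: "'v \<Rightarrow> ('a, 'f, 'v) ntrm" and D
    where wf: "\<forall>X. wf_trm srt (\<sigma> X)" and D: "ctx_subst N1 \<sigma> D" "D \<subseteq> N2"
      and aeq: "aeq N2 (perm_trm p1 (\<sigma> X1)) (Su p2 X2)"
    using assms unfolding tic_leq_def by auto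
  obtain p' where p': "perm_trm p1 (\<sigma> X1) = Su p' X2" "disagreement_set p' p2 \<subseteq> fresh_atoms N2 X2"
    using aeq by (rule aeq_Su_rightE)
  then obtain r where r: "\<sigma> X1 = Su r X2" "p' = p1 @ r"
    by (cases "\<sigma> X1") auto
  have "fresh D c (\<sigma> X1)" if "c \<in> fresh_atoms N1 X1" for c
    using D(1) that by (auto simp: ctx_subst_def fresh_atoms_def)
  with D(2) r(1) have "perm_atom (rev r) ` fresh_atoms N1 X1 \<subseteq> fresh_atoms N2 X2"
    by (auto simp: perm_inv_def fresh_atoms_def)
  moreover have "wf_trm srt (Su r X2 :: ('a, 'f, 'v) ntrm)"
    using wf r(1) by metis
  ultimately show thesis
    using that p' r(2) by blast
qed

text \<open>Witness: X1 := r.X2, and every other variable goes to a ground term, so that its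
  constraints in N1 impose nothing on N2.\<close>

lemma tic_leq_Su_SuI:
  fixes N1 N2 :: "('a, 'v) fctx"
  assumes "finite N1"
    and wf: "wf_trm srt (Su r X2 :: ('a, 'f, 'v) ntrm)"
    and fresh: "perm_atom (rev r) ` fresh_atoms N1 X1 \<subseteq> fresh_atoms N2 X2"
    and ds: "disagreement_set (p1 @ r) p2 \<subseteq> fresh_atoms N2 X2"
  shows "tic_leq srt (N1, Su p1 X1 :: ('a, 'f, 'v) ntrm) (N2, Su p2 X2)"
proof -
  define \<sigma> :: "'v \<Rightarrow> ('a, 'f, 'v) ntrm"
    where "\<sigma> Y = (if Y = X1 then Su r X2 else Fn undefined [])" for Y
  define D where "D = (\<lambda>c. (perm_atom (rev r) c, X2)) ` fresh_atoms N1 X1"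
  have "ctx_subst N1 \<sigma> D"
    using finite_fresh_atoms [OF assms(1)]
    by (auto simp: ctx_subst_def \<sigma>_def D_def perm_inv_def fresh_atoms_def)
  moreover have "D \<subseteq> N2"
    using fresh by (auto simp: D_def fresh_atoms_def)
  moreover have "aeq N2 (subst \<sigma> (Su p1 X1)) (Su p2 X2)"
    using ds by (auto simp: \<sigma>_def disagreement_set_def fresh_atoms_def intro!: aeq_Su)
  moreover have "\<forall>X. wf_trm srt (\<sigma> X)" and "respects_ctx N1 \<sigma>"
    using wf by (auto simp: respects_ctx_def \<sigma>_def)
  ultimately show ?thesis
    unfolding tic_leq_def fst_conv snd_conv by blast
qed

lemma tic_leq_Su_At_iff:
  fixes N M :: "('a, 'v) fctx"
  shows "tic_leq srt (N, Su p X :: ('a, 'f, 'v) ntrm) (M, At a) \<longleftrightarrow>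
    (perm_atom (rev p) a, X) \<notin> N"
proof
  assume "tic_leq srt (N, Su p X :: ('a, 'f, 'v) ntrm) (M, At a)"
  then obtain \<sigma> :: "'v \<Rightarrow> ('a, 'f, 'v) ntrm"
    where "respects_ctx N \<sigma>" and "aeq M (perm_trm p (\<sigma> X)) (At a)"
    unfolding tic_leq_def by auto
  moreover from this(2) have "\<sigma> X = At (perm_atom (rev p) a)"
    by (cases "\<sigma> X") (auto dest!: aeq_At_rightD)
  ultimately show "(perm_atom (rev p) a, X) \<notin> N"
    by (auto simp: respects_ctx_def)
next
  assume a: "(perm_atom (rev p) a, X) \<notin> N"
  define \<sigma> :: "'v \<Rightarrow> ('a, 'f, 'v) ntrm"
    where "\<sigma> Y = (if Y = X then At (perm_atom (rev p) a) else Fn undefined [])" for Y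
  have "ctx_subst N \<sigma> {}" and "respects_ctx N \<sigma>"
    using a by (auto simp: ctx_subst_def respects_ctx_def \<sigma>_def)
  moreover have "aeq M (subst \<sigma> (Su p X)) (At a)"
    by (simp add: \<sigma>_def aeq_At)
  moreover have "\<forall>X. wf_trm srt (\<sigma> X)"
    by (simp add: \<sigma>_def)
  ultimately show "tic_leq srt (N, Su p X :: ('a, 'f, 'v) ntrm) (M, At a)"
    unfolding tic_leq_def fst_conv snd_conv by blast
qed

lemma tic_leq_Su_trans:
  fixes N1 N2 N3 :: "('a, 'v) fctx"
  assumes "finite N1"
    and "tic_leq srt (N1, Su p1 X1 :: ('a, 'f, 'v) ntrm) (N2, Su p2 X2)"
    and "tic_leq srt (N2, Su p2 X2 :: ('a, 'f, 'v) ntrm) (N3, Su p3 X3)"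
  shows "tic_leq srt (N1, Su p1 X1 :: ('a, 'f, 'v) ntrm) (N3, Su p3 X3)"
proof -
  obtain r1 where r1: "wf_trm srt (Su r1 X2 :: ('a, 'f, 'v) ntrm)"
    "perm_atom (rev r1) ` fresh_atoms N1 X1 \<subseteq> fresh_atoms N2 X2"
    "disagreement_set (p1 @ r1) p2 \<subseteq> fresh_atoms N2 X2"
    using assms(2) by (rule tic_leq_Su_SuE)
  obtain r2 where r2: "wf_trm srt (Su r2 X3 :: ('a, 'f, 'v) ntrm)"
    "perm_atom (rev r2) ` fresh_atoms N2 X2 \<subseteq> fresh_atoms N3 X3"
    "disagreement_set (p2 @ r2) p3 \<subseteq> fresh_atoms N3 X3"
    using assms(3) by (rule tic_leq_Su_SuE)
  have "perm_atom (rev (r1 @ r2)) ` fresh_atoms N1 X1 =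
      perm_atom (rev r2) ` perm_atom (rev r1) ` fresh_atoms N1 X1"
    by (simp add: perm_atom_append image_image)
  also have "\<dots> \<subseteq> fresh_atoms N3 X3"
    using image_mono [OF r1(2)] r2(2) by (rule order_trans)
  finally have fresh: "perm_atom (rev (r1 @ r2)) ` fresh_atoms N1 X1 \<subseteq> fresh_atoms N3 X3" .
  have "disagreement_set (p1 @ r1 @ r2) p3 \<subseteq>
      disagreement_set (p2 @ r2) p3 \<union> perm_atom (rev r2) ` disagreement_set (p1 @ r1) p2"
    using disagreement_set_append_subset [of "p1 @ r1" r2 p3 p2] by simp
  also have "\<dots> \<subseteq> fresh_atoms N3 X3"
    using r2(3) order_trans [OF image_mono [OF r1(3)] r2(2)] by (rule Un_least)
  finally have ds: "disagreement_set (p1 @ r1 @ r2) p3 \<subseteq> fresh_atoms N3 X3" .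
  have wf: "wf_trm srt (Su (r1 @ r2) X3 :: ('a, 'f, 'v) ntrm)"
    using r1(1) r2(1) by auto
  show ?thesis
    using wf fresh ds by (rule tic_leq_Su_SuI [OF assms(1)])
qed

lemma tic_leq_Su_Su_card_le:
  assumes "tic_leq srt (N1, Su p1 X1) (N2, Su p2 X2)" "finite N2"
  shows "card (fresh_atoms N1 X1) \<le> card (fresh_atoms N2 X2)"
proof -
  obtain r where r: "perm_atom (rev r) ` fresh_atoms N1 X1 \<subseteq> fresh_atoms N2 X2"
    using assms(1) by (rule tic_leq_Su_SuE)
  have "card (fresh_atoms N1 X1) = card (perm_atom (rev r) ` fresh_atoms N1 X1)"
    by (rule card_image [symmetric, OF inj_on_subset [OF inj_perm_atom subset_UNIV]])
  also have "\<dots> \<le> card (fresh_atoms N2 X2)"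
    using r finite_fresh_atoms [OF assms(2)] by (rule card_mono [rotated])
  finally show ?thesis .
qed

lemma tic_leq_distinct_AtsE:
  assumes "tic_leq srt (N, t) (M1, At a)" "tic_leq srt (N, t) (M2, At b)" "a \<noteq> b"
  obtains p X where "t = Su p X"
proof -
  from assms obtain \<sigma> \<tau> where "aeq M1 (subst \<sigma> t) (At a)" "aeq M2 (subst \<tau> t) (At b)"
    unfolding tic_leq_def by auto
  then have "subst \<sigma> t = At a" "subst \<tau> t = At b"
    by (auto dest: aeq_At_rightD)
  with assms(3) that show thesis
    by (cases t) auto
qed

lemma generalization_of_distinct_atomsE:
  fixes q :: "('a, 'f, 'v) tic"
  assumes "is_generalization srt (M1, At a) (M2, At b) q" "a \<noteq> b"
  obtains N p X where "q = (N, Su p X)" and "finite N"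
    and "wf_trm srt (Su p X :: ('a, 'f, 'v) ntrm)"
    and "(perm_atom (rev p) a, X) \<notin> N" and "(perm_atom (rev p) b, X) \<notin> N"
proof -
  obtain N t where q: "q = (N, t)"
    by (cases q)
  with assms(1) have fin: "finite N" and wf: "wf_trm srt t"
    and leq: "tic_leq srt (N, t) (M1, At a)" "tic_leq srt (N, t) (M2, At b)"
    by (simp_all add: is_generalization_def is_tic_def)
  obtain p X where t: "t = Su p X"
    using leq assms(2) by (rule tic_leq_distinct_AtsE)
  have "(perm_atom (rev p) a, X) \<notin> N" "(perm_atom (rev p) b, X) \<notin> N"
    using leq by (simp_all add: t tic_leq_Su_At_iff)
  with q fin wf show thesis
    unfolding t by (rule that)
qed

lemma generalization_of_distinct_atomsI:
  assumes "finite N" "wf_trm srt (Su p X :: ('a, 'f, 'v) ntrm)"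
    and "(perm_atom (rev p) a, X) \<notin> N" "(perm_atom (rev p) b, X) \<notin> N"
  shows "is_generalization srt (M1, At a) (M2, At b) (N, Su p X :: ('a, 'f, 'v) ntrm)"
  using assms by (simp add: is_generalization_def is_tic_def tic_leq_Su_At_iff)

lemma generalization_of_distinct_atoms_not_maximal:
  fixes a b :: 'a and q :: "('a, 'f, 'v) tic"
  assumes "infinite (UNIV :: 'a set)" "a \<noteq> b"
    and "is_generalization srt (M1, At a) (M2, At b) q"
  shows "\<exists>q'. is_generalization srt (M1, At a) (M2, At b) q' \<and>
              tic_leq srt q q' \<and> \<not> tic_leq srt q' q"
proof -
  obtain N p X where q: "q = (N, Su p X)" and N: "finite N" "wf_trm srt (Su p X :: ('a, 'f, 'v) ntrm)"
    "(perm_atom (rev p) a, X) \<notin> N" "(perm_atom (rev p) b, X) \<notin> N"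
    using assms(3,2) by (rule generalization_of_distinct_atomsE)
  have "finite (fresh_atoms N X \<union> {perm_atom (rev p) a, perm_atom (rev p) b})"
    using finite_fresh_atoms [OF N(1)] by simp
  then obtain c :: 'a where c: "c \<notin> fresh_atoms N X \<union> {perm_atom (rev p) a, perm_atom (rev p) b}"
    using ex_new_if_finite [OF assms(1)] by blast
  define N' where "N' = insert (c, X) N"
  have "is_generalization srt (M1, At a) (M2, At b) (N', Su p X)"
    using N c by (auto simp: N'_def intro!: generalization_of_distinct_atomsI)
  moreover have "tic_leq srt (N, Su p X) (N', Su p X)"
    by (rule tic_leq_Su_SuI [OF N(1), where r = "[]"])
       (auto simp: N'_def fresh_atoms_def disagreement_set_def)
  moreover have "\<not> tic_leq srt (N', Su p X) (N, Su p X)"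
  proof
    assume "tic_leq srt (N', Su p X) (N, Su p X)"
    then have "card (fresh_atoms N' X) \<le> card (fresh_atoms N X)"
      using N(1) by (rule tic_leq_Su_Su_card_le)
    with c finite_fresh_atoms [OF N(1)] show False
      by (simp add: N'_def fresh_atoms_insert_same)
  qed
  ultimately show ?thesis
    using q by blast
qed

lemma generalizations_of_distinct_atoms_tic_leq_trans:
  fixes x y z :: "('a, 'f, 'v) tic"
  assumes "a \<noteq> b"
    and gen: "is_generalization srt (M1, At a) (M2, At b) x"
      "is_generalization srt (M1, At a) (M2, At b) y"
      "is_generalization srt (M1, At a) (M2, At b) z"
    and "tic_leq srt x y" "tic_leq srt y z"
  shows "tic_leq srt x z"
proof -
  obtain N1 p1 X1 where x: "x = (N1, Su p1 X1)" and "finite N1"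
    using gen(1) assms(1) by (rule generalization_of_distinct_atomsE)
  obtain N2 p2 X2 where y: "y = (N2, Su p2 X2)"
    using gen(2) assms(1) by (rule generalization_of_distinct_atomsE)
  obtain N3 p3 X3 where z: "z = (N3, Su p3 X3)"
    using gen(3) assms(1) by (rule generalization_of_distinct_atomsE)
  from \<open>finite N1\<close> assms(5,6) show ?thesis
    unfolding x y z by (rule tic_leq_Su_trans)
qed

lemma no_minimal_complete_gen_set_if_no_maximal:
  assumes "is_generalization srt p1 p2 q\<^sub>0"
    and trans: "\<And>x y z. is_generalization srt p1 p2 x \<Longrightarrow> is_generalization srt p1 p2 y \<Longrightarrow>
      is_generalization srt p1 p2 z \<Longrightarrow> tic_leq srt x y \<Longrightarrow> tic_leq srt y z \<Longrightarrow>
      tic_leq srt x z"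
    and no_maximal: "\<And>x. is_generalization srt p1 p2 x \<Longrightarrow>
      \<exists>y. is_generalization srt p1 p2 y \<and> tic_leq srt x y \<and> \<not> tic_leq srt y x"
  shows "\<not> (\<exists>G. minimal_complete_gen_set srt p1 p2 G)"
proof
  assume "\<exists>G. minimal_complete_gen_set srt p1 p2 G"
  then obtain G where G: "\<forall>q\<in>G. is_generalization srt p1 p2 q"
    and complete: "\<And>x. is_generalization srt p1 p2 x \<Longrightarrow> \<exists>q\<in>G. tic_leq srt x q"
    and minimal: "\<And>q q'. q \<in> G \<Longrightarrow> q' \<in> G \<Longrightarrow> q \<noteq> q' \<Longrightarrow>
      \<not> tic_leq srt q q'"
    unfolding minimal_complete_gen_set_def complete_gen_set_def by blast
  obtain q where q: "q \<in> G"
    using complete [OF assms(1)] by blast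
  obtain y where y: "is_generalization srt p1 p2 y" "tic_leq srt q y" "\<not> tic_leq srt y q"
    using no_maximal G q by blast
  obtain q' where q': "q' \<in> G" "tic_leq srt y q'"
    using complete [OF y(1)] by blast
  have "tic_leq srt q q'"
    using trans G q q' y by blast
  with minimal q q' have "q' = q"
    by blast
  with q' y show False
    by blast
qed

theorem theorem2:
  fixes srt :: "'a \<Rightarrow> 's" and s :: 's
  assumes "infinite {a :: 'a. srt a = s}"
    and "infinite (UNIV :: 'v set)"
  shows "\<exists>(p1 :: ('a, 'f, 'v) tic) p2.
           is_tic srt p1 \<and> is_tic srt p2 \<and>
           \<not> (\<exists>G. minimal_complete_gen_set srt p1 p2 G)"
proof -
  have atoms: "infinite (UNIV :: 'a set)"
    using subset_UNIV assms(1) by (rule infinite_super)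
  fix a :: 'a
  obtain b where "b \<notin> {a}"
    using ex_new_if_finite [OF atoms] by blast
  then have ab: "a \<noteq> b"
    by blast
  have "\<not> (\<exists>G. minimal_complete_gen_set srt ({}, At a) ({}, At b :: ('a, 'f, 'v) ntrm) G)"
  proof (rule no_minimal_complete_gen_set_if_no_maximal)
    show "is_generalization srt ({}, At a) ({}, At b) ({}, Su [] undefined :: ('a, 'f, 'v) ntrm)"
      by (rule generalization_of_distinct_atomsI) simp_all
  qed (use generalizations_of_distinct_atoms_tic_leq_trans [OF ab]
         generalization_of_distinct_atoms_not_maximal [OF atoms ab] in blast)+
  moreover have "is_tic srt ({}, At a :: ('a, 'f, 'v) ntrm)" "is_tic srt ({}, At b :: ('a, 'f, 'v) ntrm)"
    by (simp_all add: is_tic_def)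
  ultimately show ?thesis
    by blast
qed

end
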